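(* Let $X$ be a random variable uniformly distributed in $[0,1)$. For any sequence $\mathrm{a}=(a_n)_{n\ge1}$ of positive integers and any sequence $\mathrm{r}=(r_n)_{n\ge1}$ of reals in $(0,1]$, $$\Theta((\{a_nX\})_{n\ge1},\mathcal{B}(\mathrm{r}))\le 3\exp\left(4\sum_{n=1}^\infty\frac{a_n}{r_na_{n+1}}\right).$$
   Context: $\{\cdot\}$ is the fractional part, viewed as the projection $\mathbb{R}\to\mathbb{T}=\mathbb{R}/\mathbb{Z}$. For a sequence $\mathrm{X}=(X_n)$ of random points of $\mathbb{T}$ and a sequence $\mathrm{B}=(B_n)$ of Borel subsets of $\mathbb{T}$ of positive Lebesgue measure, $\theta(\mathrm{X},\mathrm{B})=\sup_{n\ge1}\frac{\mathbb{P}(X_1\in B_1,\dots,X_n\in B_n)}{\prod_{i=1}^n\mathbb{P}(X_i\in B_i)}$ and $\Theta(\mathrm{X},\mathcal{B})=\sup_{\mathrm{B}\in\mathcal{B}}\theta(\mathrm{X},\mathrm{B})$. With $q_n=\lceil1/r_n\rceil$ and $I_{n,k}$ the image of $[k/q_n,(k+1)/q_n)$ in $\mathbb{T}$ for $0\le k<q_n$, $\mathcal{B}(\mathrm{r})$ is the collection of all sequences $(I_{n,k_n})_{n\ge1}$ with integers $0\le k_n<q_n$. *)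

theory Defs
  imports "HOL-Analysis.Analysis"
begin

text \<open>The random variable X is uniform on [0,1); we realise it as the identity on
  [0,1) with Lebesgue measure, so that P(X in S) is the Lebesgue measure of [0,1) inter S.\<close>
definition unif_prob :: "real set \<Rightarrow> real" where
  "unif_prob S = measure lborel ({0..<1} \<inter> S)"

text \<open>theta(X,B) for random points X_n = Xs n (functions of the uniform variable),
  sequences indexed from 1. Values in ereal (the supremum may be infinite).\<close>
definition theta :: "(nat \<Rightarrow> real \<Rightarrow> real) \<Rightarrow> (nat \<Rightarrow> real set) \<Rightarrow> ereal" where
  "theta Xs B = (SUP n\<in>{1..}. ereal (unif_prob {x. \<forall>i\<in>{1..n}. Xs i x \<in> B i}
                                    / (\<Prod>i=1..n. unif_prob {x. Xs i x \<in> B i})))"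

definition Theta :: "(nat \<Rightarrow> real \<Rightarrow> real) \<Rightarrow> (nat \<Rightarrow> real set) set \<Rightarrow> ereal" where
  "Theta Xs Bs = (SUP B\<in>Bs. theta Xs B)"

definition qn :: "real \<Rightarrow> nat" where
  "qn r = nat \<lceil>1 / r\<rceil>"

text \<open>I_{n,k} = [k/q_n, (k+1)/q_n), a subset of [0,1) identified with its image in T.\<close>
definition cell :: "(nat \<Rightarrow> real) \<Rightarrow> nat \<Rightarrow> nat \<Rightarrow> real set" where
  "cell r n k = {real k / real (qn (r n)) ..< (real k + 1) / real (qn (r n))}"

definition Bcal :: "(nat \<Rightarrow> real) \<Rightarrow> (nat \<Rightarrow> real set) set" where
  "Bcal r = {B. \<exists>k::nat \<Rightarrow> nat. (\<forall>n\<ge>1. k n < qn (r n)) \<and> (\<forall>n\<ge>1. B n = cell r n (k n))}"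

end

theory Submission
  imports Defs
begin

text \<open>Write A_i for the set of x with frac (a_i x) in I_i. If a Borel set T satisfies
  \<lambda>(T \<inter> [s,t)) \<le> K (t - s + c) on all intervals, then A \<inter> T satisfies a bound of the same
  shape with K replaced by K (|I| + a c) and c by 2/a: the set A is a union of intervals of
  length |I|/a, one for each integer part of a x, and [s,t) meets at most a (t - s) + 2 of them.
  Peeling off the constraints from the last one backwards gives
  \<lambda>(A_1 \<inter> ... \<inter> A_n \<inter> [0,1)) \<le> 3 \<Prod> (|I_i| + 2 a_i / a_(i+1)), whereas
  \<lambda>(A_i \<inter> [0,1)) \<ge> |I_i|. For the cells |I_i| = 1/q_i \<ge> r_i/2, so the ratio is at most
  3 \<Prod> (1 + 4 a_i / (r_i a_(i+1))) \<le> 3 exp (4 \<Sum> a_i / (r_i a_(i+1))).\<close>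

lemma fmeasurable_lborel_Ico [iff]: "{l..<u::real} \<in> fmeasurable lborel"
  by (cases "l \<le> u") (auto intro: fmeasurableI)

lemma sets_borel_frac_preimages:
  "finite I \<Longrightarrow> {x::real. \<forall>i\<in>I. frac (c i * x) \<in> {l i..<u i}} \<in> sets borel"
  unfolding frac_def by measurable

lemma prod_one_plus_le_exp_sum:
  fixes x :: "'a \<Rightarrow> real"
  assumes "\<And>i. i \<in> I \<Longrightarrow> 0 \<le> x i"
  shows "(\<Prod>i\<in>I. 1 + x i) \<le> exp (\<Sum>i\<in>I. x i)"
proof (cases "finite I")
  case True
  have "(\<Prod>i\<in>I. 1 + x i) \<le> (\<Prod>i\<in>I. exp (x i))"
    using assms by (intro prod_mono) auto
  with True show ?thesis by (simp add: exp_sum)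
qed simp

definition interval_measure_bound :: "real set \<Rightarrow> real \<Rightarrow> real \<Rightarrow> bool" where
  "interval_measure_bound T K c \<longleftrightarrow>
     (\<forall>s t. s \<le> t \<longrightarrow> measure lborel (T \<inter> {s..<t}) \<le> K * (t - s + c))"

lemma card_floor_range_le:
  fixes a :: nat and s t :: real
  assumes "s \<le> t"
  shows "real (card {\<lfloor>real a * s\<rfloor>..\<lfloor>real a * t\<rfloor>}) \<le> real a * (t - s) + 2"
proof -
  have "\<lfloor>real a * s\<rfloor> \<le> \<lfloor>real a * t\<rfloor>"
    using assms by (intro floor_mono mult_left_mono) auto
  then have "real (card {\<lfloor>real a * s\<rfloor>..\<lfloor>real a * t\<rfloor>})
      = real_of_int (\<lfloor>real a * t\<rfloor> - \<lfloor>real a * s\<rfloor> + 1)"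
    by simp
  also have "\<dots> \<le> real a * (t - s) + 2"
    using of_int_floor_le[of "real a * t"] real_of_int_floor_gt_diff_one[of "real a * s"]
    by (simp add: right_diff_distrib) linarith
  finally show ?thesis .
qed

lemma interval_measure_bound_frac_preimage:
  fixes a :: nat
  assumes a: "a > 0" and "\<alpha> \<le> \<beta>" and T: "T \<in> sets borel" and "K \<ge> 0" "c \<ge> 0"
    and T_bound: "interval_measure_bound T K c"
  shows "interval_measure_bound ({x. frac (real a * x) \<in> {\<alpha>..<\<beta>}} \<inter> T)
           (K * (\<beta> - \<alpha> + real a * c)) (2 / real a)"
  unfolding interval_measure_bound_def
proof (intro allI impI)
  fix s t :: real assume "s \<le> t"
  define J where "J j = {(real_of_int j + \<alpha>) / real a ..< (real_of_int j + \<beta>) / real a} \<inter> T"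
    for j :: int
  define I where "I = {\<lfloor>real a * s\<rfloor>..\<lfloor>real a * t\<rfloor>}"
  define m where "m = K * ((\<beta> - \<alpha>) / real a + c)"
  have ap: "real a > 0" using a by simp
  have "finite I" unfolding I_def by simp
  have J_fmeas: "J j \<in> fmeasurable lborel" for j
    unfolding J_def using T by (intro fmeasurable_Int_fmeasurable fmeasurable_lborel_Ico) auto
  have cover: "{x. frac (real a * x) \<in> {\<alpha>..<\<beta>}} \<inter> T \<inter> {s..<t} \<subseteq> (\<Union>j\<in>I. J j)"
  proof
    fix x assume x: "x \<in> {x. frac (real a * x) \<in> {\<alpha>..<\<beta>}} \<inter> T \<inter> {s..<t}"
    define j where "j = \<lfloor>real a * x\<rfloor>"
    have "real a * x = real_of_int j + frac (real a * x)"
      unfolding j_def frac_def by simp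
    then have "x \<in> J j"
      using x ap unfolding J_def by (auto simp: field_simps)
    moreover have "j \<in> I"
      unfolding I_def j_def using x ap by (auto intro!: floor_mono mult_left_mono)
    ultimately show "x \<in> (\<Union>j\<in>I. J j)" by auto
  qed
  have J_bound: "measure lborel (J j) \<le> m" for j
  proof -
    have "measure lborel (J j)
        \<le> K * ((real_of_int j + \<beta>) / real a - (real_of_int j + \<alpha>) / real a + c)"
      using T_bound \<open>\<alpha> \<le> \<beta>\<close> ap unfolding J_def interval_measure_bound_def
      by (simp add: Int_commute divide_right_mono)
    also have "\<dots> = m" unfolding m_def using ap by (simp add: field_simps)
    finally show ?thesis .
  qed
  have "measure lborel ({x. frac (real a * x) \<in> {\<alpha>..<\<beta>}} \<inter> T \<inter> {s..<t})
      \<le> measure lborel (\<Union>j\<in>I. J j)"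
    using T J_fmeas \<open>finite I\<close>
    by (intro measure_mono_fmeasurable[OF cover]) (auto simp: frac_def)
  also have "\<dots> \<le> (\<Sum>j\<in>I. measure lborel (J j))"
    using J_fmeas \<open>finite I\<close> by (intro measure_UNION_le) (use fmeasurableD in fastforce)+
  also have "\<dots> \<le> real (card I) * m"
    using sum_mono[of I _ "\<lambda>_. m", OF J_bound] by simp
  also have "\<dots> \<le> (real a * (t - s) + 2) * m"
    unfolding I_def m_def using card_floor_range_le[OF \<open>s \<le> t\<close>] assms ap
    by (intro mult_right_mono) auto
  also have "\<dots> = K * (\<beta> - \<alpha> + real a * c) * (t - s + 2 / real a)"
    unfolding m_def using ap by (simp add: field_simps)
  finally show "measure lborel ({x. frac (real a * x) \<in> {\<alpha>..<\<beta>}} \<inter> T \<inter> {s..<t})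
      \<le> K * (\<beta> - \<alpha> + real a * c) * (t - s + 2 / real a)" .
qed

lemma interval_measure_bound_frac_preimages:
  fixes a :: "nat \<Rightarrow> nat"
  assumes "\<And>i. i \<in> {k..n} \<Longrightarrow> a i > 0" and "\<And>i. i \<in> {k..n} \<Longrightarrow> \<alpha> i \<le> \<beta> i"
  shows "interval_measure_bound {x. \<forall>i\<in>{k..n}. frac (real (a i) * x) \<in> {\<alpha> i..<\<beta> i}}
           (\<Prod>i=k..n. \<beta> i - \<alpha> i + 2 * real (a i) / real (a (Suc i))) (2 / real (a k))"
  using assms
proof (induction "Suc n - k" arbitrary: k)
  case 0
  then show ?case by (simp add: interval_measure_bound_def)
next
  case (Suc d)
  then have "k \<le> n" by simp
  define T where "T = {x. \<forall>i\<in>{Suc k..n}. frac (real (a i) * x) \<in> {\<alpha> i..<\<beta> i}}"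
  define K where "K = (\<Prod>i=Suc k..n. \<beta> i - \<alpha> i + 2 * real (a i) / real (a (Suc i)))"
  have "interval_measure_bound T K (2 / real (a (Suc k)))"
    unfolding T_def K_def using Suc by (intro Suc.hyps) auto
  moreover have "K \<ge> 0"
    unfolding K_def using Suc.prems by (intro prod_nonneg) (simp add: add_nonneg_nonneg)
  ultimately have "interval_measure_bound ({x. frac (real (a k) * x) \<in> {\<alpha> k..<\<beta> k}} \<inter> T)
      (K * (\<beta> k - \<alpha> k + real (a k) * (2 / real (a (Suc k))))) (2 / real (a k))"
    using Suc.prems \<open>k \<le> n\<close> unfolding T_def
    by (intro interval_measure_bound_frac_preimage sets_borel_frac_preimages) auto
  moreover have "{x. \<forall>i\<in>{k..n}. frac (real (a i) * x) \<in> {\<alpha> i..<\<beta> i}}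
      = {x. frac (real (a k) * x) \<in> {\<alpha> k..<\<beta> k}} \<inter> T"
    unfolding T_def using \<open>k \<le> n\<close> by (auto simp: Icc_eq_insert_lb_nat)
  moreover have "(\<Prod>i=k..n. \<beta> i - \<alpha> i + 2 * real (a i) / real (a (Suc i)))
      = K * (\<beta> k - \<alpha> k + real (a k) * (2 / real (a (Suc k))))"
    unfolding K_def using \<open>k \<le> n\<close> by (simp add: prod.atLeast_Suc_atMost mult.commute)
  ultimately show ?case by simp
qed

lemma unif_prob_frac_preimage_ge:
  fixes a :: nat
  assumes a: "a > 0" and "0 \<le> \<alpha>" "\<alpha> \<le> \<beta>" "\<beta> \<le> 1"
  shows "\<beta> - \<alpha> \<le> unif_prob {x. frac (real a * x) \<in> {\<alpha>..<\<beta>}}"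
proof -
  define K where "K j = {(real j + \<alpha>) / real a ..< (real j + \<beta>) / real a}" for j :: nat
  have ap: "real a > 0" using a by simp
  have K_iff: "x \<in> K j \<longleftrightarrow> real j + \<alpha> \<le> real a * x \<and> real a * x < real j + \<beta>" for x j
    unfolding K_def using ap by (auto simp: field_simps)
  have floor_K: "\<lfloor>real a * x\<rfloor> = int j" if "x \<in> K j" for x j
    using that assms unfolding K_iff by (intro floor_unique) auto
  have sub: "(\<Union>j<a. K j) \<subseteq> {0..<1} \<inter> {x. frac (real a * x) \<in> {\<alpha>..<\<beta>}}"
  proof
    fix x assume "x \<in> (\<Union>j<a. K j)"
    then obtain j where j: "j < a" "x \<in> K j" by auto
    have "frac (real a * x) = real a * x - real j"
      unfolding frac_def using floor_K[OF j(2)] by simp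
    moreover have "0 \<le> real a * x" "real a * x < real a"
      using j assms unfolding K_iff by linarith+
    ultimately show "x \<in> {0..<1} \<inter> {x. frac (real a * x) \<in> {\<alpha>..<\<beta>}}"
      using j ap unfolding K_iff by (auto simp: zero_le_mult_iff)
  qed
  have "pairwise (\<lambda>i j. disjnt (K i) (K j)) {..<a}"
    unfolding pairwise_def disjnt_def using floor_K by (metis disjoint_iff of_nat_eq_iff)
  then have "measure lborel (\<Union>j<a. K j) = (\<Sum>j<a. measure lborel (K j))"
    unfolding K_def by (intro measure_UNION') auto
  also have "\<dots> = (\<Sum>j<a. (\<beta> - \<alpha>) / real a)"
    unfolding K_def using ap \<open>\<alpha> \<le> \<beta>\<close> by (intro sum.cong) (auto simp: divide_right_mono field_simps)
  also have "\<dots> = \<beta> - \<alpha>" using ap by simp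
  finally have "measure lborel (\<Union>j<a. K j) = \<beta> - \<alpha>" .
  moreover have "measure lborel (\<Union>j<a. K j)
      \<le> measure lborel ({0..<1} \<inter> {x. frac (real a * x) \<in> {\<alpha>..<\<beta>}})"
    unfolding K_def
    by (intro measure_mono_fmeasurable[OF sub[unfolded K_def]] fmeasurable_Int_fmeasurable
        fmeasurable_lborel_Ico) (auto simp: frac_def)
  ultimately show ?thesis unfolding unif_prob_def by simp
qed

lemma joint_frac_prob_ratio_le:
  fixes a :: "nat \<Rightarrow> nat"
  assumes a: "\<And>i. i \<in> {1..n} \<Longrightarrow> a i > 0"
    and \<alpha>\<beta>: "\<And>i. i \<in> {1..n} \<Longrightarrow> 0 \<le> \<alpha> i \<and> \<alpha> i < \<beta> i \<and> \<beta> i \<le> 1"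
  shows "unif_prob {x. \<forall>i\<in>{1..n}. frac (real (a i) * x) \<in> {\<alpha> i..<\<beta> i}}
           / (\<Prod>i=1..n. unif_prob {x. frac (real (a i) * x) \<in> {\<alpha> i..<\<beta> i}})
         \<le> 3 * (\<Prod>i=1..n. 1 + 2 * real (a i) / ((\<beta> i - \<alpha> i) * real (a (Suc i))))"
proof -
  define W where "W = (\<Prod>i=1..n. \<beta> i - \<alpha> i)"
  define D where "D = (\<Prod>i=1..n. 1 + 2 * real (a i) / ((\<beta> i - \<alpha> i) * real (a (Suc i))))"
  have "W > 0" unfolding W_def using \<alpha>\<beta> by (intro prod_pos) auto
  have "D \<ge> 0" unfolding D_def using \<alpha>\<beta> by (intro prod_nonneg) (fastforce intro!: divide_nonneg_nonneg)
  have W_le: "W \<le> (\<Prod>i=1..n. unif_prob {x. frac (real (a i) * x) \<in> {\<alpha> i..<\<beta> i}})"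
    unfolding W_def using a \<alpha>\<beta>
    by (intro prod_mono conjI unif_prob_frac_preimage_ge) (auto simp: less_imp_le)
  have "\<beta> i - \<alpha> i + 2 * real (a i) / real (a (Suc i))
      = (\<beta> i - \<alpha> i) * (1 + 2 * real (a i) / ((\<beta> i - \<alpha> i) * real (a (Suc i))))"
    if "i \<in> {1..n}" for i
    using \<alpha>\<beta>[OF that] by (cases "a (Suc i) = 0") (simp_all add: field_simps)
  then have "(\<Prod>i=1..n. \<beta> i - \<alpha> i + 2 * real (a i) / real (a (Suc i))) = W * D"
    unfolding W_def D_def prod.distrib[symmetric] by (rule prod.cong[OF refl])
  then have bound: "interval_measure_bound
      {x. \<forall>i\<in>{1..n}. frac (real (a i) * x) \<in> {\<alpha> i..<\<beta> i}} (W * D) (2 / real (a 1))"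
    using interval_measure_bound_frac_preimages[of 1 n a \<alpha> \<beta>] a \<alpha>\<beta> by (simp add: less_imp_le)
  have "unif_prob {x. \<forall>i\<in>{1..n}. frac (real (a i) * x) \<in> {\<alpha> i..<\<beta> i}}
      \<le> W * D * (1 - 0 + 2 / real (a 1))"
    using bound[unfolded interval_measure_bound_def, rule_format, of 0 1]
    unfolding unif_prob_def by (simp add: Int_commute)
  also have "\<dots> \<le> W * D * 3"
    using \<open>W > 0\<close> \<open>D \<ge> 0\<close> by (intro mult_left_mono) (auto simp: divide_le_eq)
  also have "\<dots> \<le> 3 * D * (\<Prod>i=1..n. unif_prob {x. frac (real (a i) * x) \<in> {\<alpha> i..<\<beta> i}})"
    using W_le \<open>D \<ge> 0\<close> by (simp add: mult.commute mult_left_mono)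
  finally show ?thesis
    using \<open>W > 0\<close> W_le unfolding D_def by (simp add: divide_le_eq)
qed

lemma qn_pos: "0 < r \<Longrightarrow> 0 < qn r"
  unfolding qn_def by simp

lemma real_qn_le: "0 < r \<Longrightarrow> r \<le> 1 \<Longrightarrow> real (qn r) \<le> 2 / r"
proof -
  assume "0 < r" "r \<le> 1"
  then have "1 \<le> 1 / r" by simp
  then have "real (qn r) = real_of_int \<lceil>1 / r\<rceil>" unfolding qn_def by simp
  also have "\<dots> \<le> 1 / r + 1" by linarith
  also have "\<dots> \<le> 2 / r" using \<open>1 \<le> 1 / r\<close> by simp
  finally show ?thesis .
qed

lemma frac_cells_ratio_le:
  fixes a :: "nat \<Rightarrow> nat" and r :: "nat \<Rightarrow> real"
  assumes a: "\<And>i. i \<in> {1..n} \<Longrightarrow> a i > 0" and r: "\<And>i. i \<in> {1..n} \<Longrightarrow> 0 < r i \<and> r i \<le> 1"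
    and "B \<in> Bcal r"
  shows "unif_prob {x. \<forall>i\<in>{1..n}. frac (real (a i) * x) \<in> B i}
           / (\<Prod>i=1..n. unif_prob {x. frac (real (a i) * x) \<in> B i})
         \<le> 3 * exp (4 * (\<Sum>i=1..n. real (a i) / (r i * real (a (Suc i)))))"
proof -
  obtain k where k: "\<And>i. i \<ge> 1 \<Longrightarrow> k i < qn (r i)" "\<And>i. i \<ge> 1 \<Longrightarrow> B i = cell r i (k i)"
    using \<open>B \<in> Bcal r\<close> unfolding Bcal_def by blast
  define q where "q i = real (qn (r i))" for i
  define \<alpha> where "\<alpha> i = real (k i) / q i" for i
  define \<beta> where "\<beta> i = (real (k i) + 1) / q i" for i
  define f where "f i = real (a i) / (r i * real (a (Suc i)))" for i
  have q: "0 < q i" "q i \<le> 2 / r i" if "i \<in> {1..n}" for i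
    unfolding q_def using r[OF that] qn_pos real_qn_le by auto
  have B_eq: "B i = {\<alpha> i..<\<beta> i}" if "i \<in> {1..n}" for i
    using k(2)[of i] that unfolding cell_def \<alpha>_def \<beta>_def q_def by simp
  have \<alpha>\<beta>: "0 \<le> \<alpha> i \<and> \<alpha> i < \<beta> i \<and> \<beta> i \<le> 1" if "i \<in> {1..n}" for i
  proof -
    have "real (k i) + 1 \<le> q i" using k(1)[of i] that unfolding q_def by simp
    then show ?thesis using q[OF that] unfolding \<alpha>_def \<beta>_def by (simp add: divide_strict_right_mono)
  qed
  have factor_le: "1 + 2 * real (a i) / ((\<beta> i - \<alpha> i) * real (a (Suc i))) \<le> 1 + 4 * f i"
    if "i \<in> {1..n}" for i
  proof -
    have "\<beta> i - \<alpha> i = 1 / q i" unfolding \<alpha>_def \<beta>_def using q[OF that] by (simp add: field_simps)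
    then have "2 * real (a i) / ((\<beta> i - \<alpha> i) * real (a (Suc i))) = 2 * real (a i) * q i / real (a (Suc i))"
      by simp
    also have "\<dots> \<le> 2 * real (a i) * (2 / r i) / real (a (Suc i))"
      using q[OF that] by (intro divide_right_mono mult_left_mono) auto
    also have "\<dots> = 4 * f i" unfolding f_def using r[OF that] by (simp add: field_simps)
    finally show ?thesis by simp
  qed
  have "unif_prob {x. \<forall>i\<in>{1..n}. frac (real (a i) * x) \<in> B i}
          / (\<Prod>i=1..n. unif_prob {x. frac (real (a i) * x) \<in> B i})
      = unif_prob {x. \<forall>i\<in>{1..n}. frac (real (a i) * x) \<in> {\<alpha> i..<\<beta> i}}
          / (\<Prod>i=1..n. unif_prob {x. frac (real (a i) * x) \<in> {\<alpha> i..<\<beta> i}})"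
    using B_eq by (intro arg_cong2[where f = "(/)"] arg_cong[where f = unif_prob] prod.cong) auto
  also have "\<dots> \<le> 3 * (\<Prod>i=1..n. 1 + 2 * real (a i) / ((\<beta> i - \<alpha> i) * real (a (Suc i))))"
    using a \<alpha>\<beta> by (rule joint_frac_prob_ratio_le)
  also have "\<dots> \<le> 3 * (\<Prod>i=1..n. 1 + 4 * f i)"
    using \<alpha>\<beta> factor_le by (intro mult_left_mono prod_mono) (fastforce intro!: divide_nonneg_nonneg)+
  also have "\<dots> \<le> 3 * exp (4 * (\<Sum>i=1..n. f i))"
    using r unfolding f_def sum_distrib_left
    by (intro mult_left_mono prod_one_plus_le_exp_sum) (fastforce intro!: divide_nonneg_nonneg)+
  finally show ?thesis unfolding f_def .
qed

lemma theta_frac_cells_le: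
  fixes a :: "nat \<Rightarrow> nat" and r :: "nat \<Rightarrow> real"
  assumes "\<And>i. i \<ge> 1 \<Longrightarrow> a i > 0" and "\<And>i. i \<ge> 1 \<Longrightarrow> 0 < r i \<and> r i \<le> 1"
    and "B \<in> Bcal r" and partial_sum_le: "\<And>n. (\<Sum>i=1..n. real (a i) / (r i * real (a (Suc i)))) \<le> S"
  shows "theta (\<lambda>n x. frac (real (a n) * x)) B \<le> ereal (3 * exp (4 * S))"
  unfolding theta_def
proof (rule SUP_least)
  fix n :: nat
  have "unif_prob {x. \<forall>i\<in>{1..n}. frac (real (a i) * x) \<in> B i}
        / (\<Prod>i=1..n. unif_prob {x. frac (real (a i) * x) \<in> B i})
      \<le> 3 * exp (4 * (\<Sum>i=1..n. real (a i) / (r i * real (a (Suc i)))))"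
    using assms by (intro frac_cells_ratio_le) auto
  also have "\<dots> \<le> 3 * exp (4 * S)"
    using partial_sum_le[of n] by simp
  finally show "ereal (unif_prob {x. \<forall>i\<in>{1..n}. frac (real (a i) * x) \<in> B i}
        / (\<Prod>i=1..n. unif_prob {x. frac (real (a i) * x) \<in> B i}))
      \<le> ereal (3 * exp (4 * S))"
    by simp
qed

theorem proposition5p1:
  fixes a :: "nat \<Rightarrow> nat" and r :: "nat \<Rightarrow> real"
  assumes "\<And>n. n \<ge> 1 \<Longrightarrow> a n > 0"
      and "\<And>n. n \<ge> 1 \<Longrightarrow> 0 < r n \<and> r n \<le> 1"
  shows "Theta (\<lambda>n x. frac (real (a n) * x)) (Bcal r)
     \<le> (if summable (\<lambda>n. real (a (n+1)) / (r (n+1) * real (a (n+2))))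
         then ereal (3 * exp (4 * (\<Sum>n. real (a (n+1)) / (r (n+1) * real (a (n+2))))))
         else \<infinity>)"
proof (cases "summable (\<lambda>n. real (a (n+1)) / (r (n+1) * real (a (n+2))))")
  case True
  define f where "f i = real (a i) / (r i * real (a (Suc i)))" for i
  have "summable (\<lambda>n. f (Suc n))" using True unfolding f_def by simp
  moreover have "0 \<le> f (Suc n)" for n using assms(2)[of "Suc n"] unfolding f_def by simp
  ultimately have "(\<Sum>i=1..n. f i) \<le> (\<Sum>n. f (Suc n))" for n
    using sum_le_suminf[of "\<lambda>n. f (Suc n)" "{..<n}"] by (simp add: sum.atLeast1_atMost_eq)
  then have "theta (\<lambda>n x. frac (real (a n) * x)) B \<le> ereal (3 * exp (4 * (\<Sum>n. f (Suc n))))"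
    if "B \<in> Bcal r" for B
    using assms that unfolding f_def by (intro theta_frac_cells_le) auto
  then have "Theta (\<lambda>n x. frac (real (a n) * x)) (Bcal r) \<le> ereal (3 * exp (4 * (\<Sum>n. f (Suc n))))"
    unfolding Theta_def by (rule SUP_least)
  then show ?thesis using True unfolding f_def by simp
qed simp

end
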